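(* Let $I=(a_1,\dots,a_n)\in(0,1]^n$ be a sorted item sequence, and let $I_1$ be the subsequence of $I$ consisting of the items that are sole class-1 items in the assignment $f$ produced by $MM_2$ on $I$. Then for every assignment $g$ of $I$ without cardinality constraints there exists an assignment $g'$ of $I$ without cardinality constraints such that $g$ and $g'$ use the same number of non-empty bins and every item of $I_1$ is a sole item in $g'$.
   Context: An item sequence $I=(a_1,\dots,a_n)\in(0,1]^n$ is sorted if $a_1\ge\cdots\ge a_n$. An assignment without cardinality constraints is a map $g:\{1,\dots,n\}\to\mathbb{N}$ with $\sum_{i:g(i)=j}a_i\le1$ for each bin $j$; $|g(I)|$ denotes its number of non-empty bins. A class-1 item is an item of size in $(\frac12,1]$; an item is sole if its bin contains no other item. Algorithm $MM_k$: sort the items in non-increasing order (an already sorted input is left unchanged); keep a single open bin with load $S$. Repeat while items remain: if the open bin already contains $k$ items, close it and open a new bin; else if the head (largest remaining) item fits ($S+\text{head}\le1$) pack it; else if the tail (smallest remaining) item fits pack it; else close the open bin permanently and open a new empty bin. $MM_2$ is the case $k=2$. *)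

theory Defs
  imports Complex_Main
begin

text \<open>Items are given as a list a of reals; item i (i < length a) has size a ! i.
  Assignments are maps g :: nat \<Rightarrow> nat from item indices to bin numbers.\<close>

definition sorted_items :: "real list \<Rightarrow> bool" where
  "sorted_items a \<longleftrightarrow> sorted_wrt (\<ge>) a \<and> (\<forall>x\<in>set a. 0 < x \<and> x \<le> 1)"

definition is_assignment :: "real list \<Rightarrow> (nat \<Rightarrow> nat) \<Rightarrow> bool" where
  "is_assignment a g \<longleftrightarrow> (\<forall>j. (\<Sum>i\<in>{i. i < length a \<and> g i = j}. a ! i) \<le> 1)"

definition num_bins :: "real list \<Rightarrow> (nat \<Rightarrow> nat) \<Rightarrow> nat" where
  "num_bins a g = card (g ` {..<length a})"

definition sole :: "real list \<Rightarrow> (nat \<Rightarrow> nat) \<Rightarrow> nat \<Rightarrow> bool" where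
  "sole a g i \<longleftrightarrow> (\<forall>i'<length a. i' \<noteq> i \<longrightarrow> g i' \<noteq> g i)"

definition class1 :: "real list \<Rightarrow> nat \<Rightarrow> bool" where
  "class1 a i \<longleftrightarrow> a ! i > 1/2"

text \<open>State: remaining item indices rem
  (head = largest, last = smallest), current open bin b, its load S, its item count c,
  and the assignment built so far.  The final stuck branch (empty bin, nothing fits) is
  unreachable for items of size at most 1.\<close>

function mm_run :: "nat \<Rightarrow> real list \<Rightarrow> nat list \<Rightarrow> nat \<Rightarrow> real \<Rightarrow> nat \<Rightarrow> (nat \<Rightarrow> nat) \<Rightarrow> (nat \<Rightarrow> nat)" where
  "mm_run k a [] b S c f = f"
| "mm_run k a (h # rest) b S c f =
     (if k \<le> c \<and> 0 < c then mm_run k a (h # rest) (Suc b) 0 0 f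
      else if S + a ! h \<le> 1 then mm_run k a rest b (S + a ! h) (Suc c) (f(h := b))
      else if S + a ! last (h # rest) \<le> 1
        then mm_run k a (butlast (h # rest)) b (S + a ! last (h # rest)) (Suc c) (f(last (h # rest) := b))
      else if 0 < c then mm_run k a (h # rest) (Suc b) 0 0 f
      else f)"
  by pat_completeness auto
termination
  by (relation "measure (\<lambda>(k, a, rem, b, S, c, f). 2 * length rem + (if 0 < c then 1 else 0))") auto

definition MM :: "nat \<Rightarrow> real list \<Rightarrow> (nat \<Rightarrow> nat)" where
  "MM k a = mm_run k a [0..<length a] 0 0 0 (\<lambda>_. 0)"

end

theory Submission
  imports Defs
begin

text \<open>Call an item dominating if it is at least as large as some sole class-1 item of
  f = MM_2. Dominating items exceed 1/2, so g puts them into distinct bins. MM_2 opens every bin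
  with the largest remaining item and closes a bin holding a single class-1 item i only when no
  remaining item fits next to i; hence every item fitting next to i was packed earlier, into a
  bin opened by a dominating item. So every item sharing a g-bin with a dominating item also
  shares its f-bin with one, and can be moved into the g-bin of that item. This empties no bin,
  makes every g-bin of a dominating item part of its f-bin, and so keeps the sole class-1
  items of f sole.\<close>

lemma sorted_items_nth_antimono:
  assumes "sorted_items a" "i \<le> j" "j < length a"
  shows "a ! j \<le> a ! i"
  using assms sorted_wrt_nth_less[of "(\<ge>)" a i j]
  by (cases "i = j") (auto simp: sorted_items_def)

lemma sorted_items_nth_le_1:
  assumes "sorted_items a" "i < length a"
  shows "a ! i \<le> 1"
  using assms by (auto simp: sorted_items_def nth_mem)

lemma sorted_items_nonneg: "sorted_items a \<Longrightarrow> \<forall>x\<in>set a. 0 \<le> x"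
  by (auto simp: sorted_items_def)

lemma sum_items_mono:
  fixes a :: "real list"
  assumes nonneg: "\<forall>x\<in>set a. 0 \<le> x" and "A \<subseteq> B" "B \<subseteq> {..<length a}"
  shows "(\<Sum>i\<in>A. a ! i) \<le> (\<Sum>i\<in>B. a ! i)"
proof (rule sum_mono2)
  show "finite B" using assms(3) finite_subset by blast
  show "0 \<le> a ! i" if "i \<in> B - A" for i
    using that assms(3) nonneg by (auto simp: nth_mem)
qed (fact assms(2))

lemma assignment_pair_le:
  fixes a :: "real list"
  assumes nonneg: "\<forall>x\<in>set a. 0 \<le> x" and g: "is_assignment a g"
    and "x < length a" "y < length a" "x \<noteq> y" "g x = g y"
  shows "a ! x + a ! y \<le> 1"
proof -
  have "a ! x + a ! y = (\<Sum>i\<in>{x, y}. a ! i)" using assms(5) by simp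
  also have "\<dots> \<le> (\<Sum>i\<in>{i. i < length a \<and> g i = g x}. a ! i)"
    using assms(3-6) by (intro sum_items_mono[OF nonneg]) auto
  also have "\<dots> \<le> 1" using g by (simp add: is_assignment_def)
  finally show ?thesis .
qed

lemma bin_load_le_if_subset:
  fixes a :: "real list"
  assumes nonneg: "\<forall>x\<in>set a. 0 \<le> x" and f: "is_assignment a f"
    and sub: "{i. i < length a \<and> g i = j} \<subseteq> {i. i < length a \<and> f i = k}"
  shows "(\<Sum>i\<in>{i. i < length a \<and> g i = j}. a ! i) \<le> 1"
proof -
  have "(\<Sum>i\<in>{i. i < length a \<and> g i = j}. a ! i) \<le> (\<Sum>i\<in>{i. i < length a \<and> f i = k}. a ! i)"
    using sub by (intro sum_items_mono[OF nonneg]) auto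
  also have "\<dots> \<le> 1" using f by (simp add: is_assignment_def)
  finally show ?thesis .
qed

lemma regroup_bins:
  fixes f g :: "nat \<Rightarrow> nat"
  assumes L: "L \<subseteq> {..<n}" and inj: "inj_on g L"
    and partner: "\<And>u. u < n \<Longrightarrow> u \<notin> L \<Longrightarrow> g u \<in> g ` L \<Longrightarrow> \<exists>l\<in>L. f l = f u"
  obtains g' where "g' ` {..<n} = g ` {..<n}"
    and "\<And>l. l \<in> L \<Longrightarrow> g' l = g l"
    and "\<And>l. l \<in> L \<Longrightarrow> {i. i < n \<and> g' i = g' l} \<subseteq> {i. i < n \<and> f i = f l}"
    and "\<And>j. j \<notin> g ` L \<Longrightarrow> {i. i < n \<and> g' i = j} \<subseteq> {i. i < n \<and> g i = j}"
proof -
  define U where "U = {u. u < n \<and> u \<notin> L \<and> g u \<in> g ` L}"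
  have "\<forall>u\<in>U. \<exists>l. l \<in> L \<and> f l = f u"
    using partner by (auto simp: U_def)
  from bchoice[OF this] obtain p where p: "\<forall>u\<in>U. p u \<in> L \<and> f (p u) = f u"
    by blast
  define g' where "g' u = (if u \<in> U then g (p u) else g u)" for u
  have g'_L: "g' l = g l" if "l \<in> L" for l
    using that by (simp add: g'_def U_def)
  show thesis
  proof
    show "g' ` {..<n} = g ` {..<n}"
    proof
      show "g' ` {..<n} \<subseteq> g ` {..<n}"
        using p L unfolding g'_def by fastforce
      show "g ` {..<n} \<subseteq> g' ` {..<n}"
      proof
        fix y assume "y \<in> g ` {..<n}"
        then obtain u where u: "u < n" "y = g u" by blast
        show "y \<in> g' ` {..<n}"
        proof (cases "u \<in> U")
          case True
          then obtain l where "l \<in> L" "y = g l"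
            using u unfolding U_def by blast
          then show ?thesis using L g'_L by force
        next
          case False
          then show ?thesis using u unfolding g'_def by simp
        qed
      qed
    qed
    show "g' l = g l" if "l \<in> L" for l using that by (fact g'_L)
    show "{i. i < n \<and> g' i = g' l} \<subseteq> {i. i < n \<and> f i = f l}" if l: "l \<in> L" for l
    proof safe
      fix i assume i: "i < n" "g' i = g' l"
      show "f i = f l"
      proof (cases "i \<in> U")
        case True
        then have "g (p i) = g l" using i(2) g'_L[OF l] unfolding g'_def by simp
        then have "p i = l" using inj l p True by (meson inj_onD)
        then show ?thesis using p True by auto
      next
        case False
        then have "g i = g l" using i(2) g'_L[OF l] unfolding g'_def by simp
        then have "i \<in> L" using False i(1) l unfolding U_def by blast
        then show ?thesis using inj l \<open>g i = g l\<close> by (metis inj_onD)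
      qed
    qed
    show "{i. i < n \<and> g' i = j} \<subseteq> {i. i < n \<and> g i = j}" if "j \<notin> g ` L" for j
      using that p unfolding g'_def by auto
  qed
qed

definition fitting_items_dominated :: "real list \<Rightarrow> (nat \<Rightarrow> nat) \<Rightarrow> bool" where
  "fitting_items_dominated a f \<longleftrightarrow>
     (\<forall>i<length a. class1 a i \<and> sole a f i \<longrightarrow>
        (\<forall>u<length a. a ! u \<le> 1 - a ! i \<longrightarrow> (\<exists>h<length a. f h = f u \<and> a ! i \<le> a ! h)))"

definition dominating_items :: "real list \<Rightarrow> (nat \<Rightarrow> nat) \<Rightarrow> nat set" where
  "dominating_items a f =
     {l. l < length a \<and> (\<exists>i<length a. class1 a i \<and> sole a f i \<and> a ! i \<le> a ! l)}"

lemma dominating_items_gt_half: "l \<in> dominating_items a f \<Longrightarrow> 1/2 < a ! l"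
  by (auto simp: dominating_items_def class1_def)

lemma inj_on_dominating_items:
  assumes nonneg: "\<forall>x\<in>set a. 0 \<le> x" and g: "is_assignment a g"
  shows "inj_on g (dominating_items a f)"
proof (rule inj_onI, rule ccontr)
  fix l l' assume l: "l \<in> dominating_items a f" "l' \<in> dominating_items a f" "g l = g l'" "l \<noteq> l'"
  then have "a ! l + a ! l' \<le> 1"
    by (intro assignment_pair_le[OF nonneg g]) (auto simp: dominating_items_def)
  then show False using dominating_items_gt_half[OF l(1)] dominating_items_gt_half[OF l(2)] by linarith
qed

lemma dominating_item_in_bin:
  assumes nonneg: "\<forall>x\<in>set a. 0 \<le> x" and f: "fitting_items_dominated a f"
    and g: "is_assignment a g"
    and u: "u < length a" "u \<notin> dominating_items a f" "g u \<in> g ` dominating_items a f"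
  shows "\<exists>l'\<in>dominating_items a f. f l' = f u"
proof -
  obtain l where l: "l \<in> dominating_items a f" "g u = g l" using u(3) by blast
  obtain i where i: "i < length a" "class1 a i" "sole a f i" "a ! i \<le> a ! l"
    using l(1) unfolding dominating_items_def by blast
  have "a ! u + a ! l \<le> 1"
    using u l by (intro assignment_pair_le[OF nonneg g]) (auto simp: dominating_items_def)
  then have "a ! u \<le> 1 - a ! i" using i(4) by simp
  then obtain h where "h < length a" "f h = f u" "a ! i \<le> a ! h"
    using f i u(1) unfolding fitting_items_dominated_def by blast
  then show ?thesis using i unfolding dominating_items_def by blast
qed

lemma exists_assignment_isolating_sole_class1:
  fixes a :: "real list"
  assumes nonneg: "\<forall>x\<in>set a. 0 \<le> x"
    and f: "is_assignment a f" "fitting_items_dominated a f"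
    and g: "is_assignment a g"
  shows "\<exists>g'. is_assignment a g' \<and> num_bins a g' = num_bins a g \<and>
           (\<forall>i<length a. class1 a i \<and> sole a f i \<longrightarrow> sole a g' i)"
proof -
  let ?L = "dominating_items a f"
  obtain g' where image: "g' ` {..<length a} = g ` {..<length a}"
    and g'_L: "\<And>l. l \<in> ?L \<Longrightarrow> g' l = g l"
    and bin_L: "\<And>l. l \<in> ?L \<Longrightarrow>
      {i. i < length a \<and> g' i = g' l} \<subseteq> {i. i < length a \<and> f i = f l}"
    and bin_other: "\<And>j. j \<notin> g ` ?L \<Longrightarrow>
      {i. i < length a \<and> g' i = j} \<subseteq> {i. i < length a \<and> g i = j}"
    by (rule regroup_bins[OF _ inj_on_dominating_items[OF nonneg g]
      dominating_item_in_bin[OF nonneg f(2) g]]) (auto simp: dominating_items_def)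
  have "is_assignment a g'"
    unfolding is_assignment_def
  proof
    fix j
    show "(\<Sum>i\<in>{i. i < length a \<and> g' i = j}. a ! i) \<le> 1"
    proof (cases "j \<in> g ` ?L")
      case True
      then obtain l where "l \<in> ?L" "j = g' l" using g'_L by force
      then show ?thesis using bin_L bin_load_le_if_subset[OF nonneg f(1), of g' j "f l"] by simp
    next
      case False
      then show ?thesis using bin_other bin_load_le_if_subset[OF nonneg g, of g' j j] by simp
    qed
  qed
  moreover have "num_bins a g' = num_bins a g"
    using image by (simp add: num_bins_def)
  moreover have "sole a g' i" if "i < length a" "class1 a i" "sole a f i" for i
  proof -
    have "i \<in> ?L" using that by (auto simp: dominating_items_def)
    then show ?thesis using bin_L that(3) by (fastforce simp: sole_def)
  qed
  ultimately show ?thesis by blast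
qed

text \<open>The first item packed into a bin was the
  largest unpacked item at the time; bin_head records this in terms of indices. A bin holding
  a single class-1 item i is closed only when no unpacked item fits next to i;
  closed_sole_bin records this.\<close>

locale mm_invariant =
  fixes a :: "real list" and P :: "nat set" and b :: nat and S :: real and c :: nat
    and f :: "nat \<Rightarrow> nat"
  assumes packed_subset: "P \<subseteq> {..<length a}"
    and packed_le_open: "\<And>i. i \<in> P \<Longrightarrow> f i \<le> b"
    and open_card: "c = card {i\<in>P. f i = b}"
    and open_load: "S = (\<Sum>i\<in>{i\<in>P. f i = b}. a ! i)"
    and bin_load_le: "\<And>j. (\<Sum>i\<in>{i\<in>P. f i = j}. a ! i) \<le> 1"
    and bin_head: "\<And>u. u \<in> P \<Longrightarrow>
      \<exists>h\<in>P. f h = f u \<and> (\<forall>v<length a. v \<notin> P \<or> f u < f v \<longrightarrow> h \<le> v)"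
    and closed_sole_bin: "\<And>i u. class1 a i \<Longrightarrow> f i < b \<Longrightarrow> {j\<in>P. f j = f i} = {i} \<Longrightarrow>
      u < length a \<Longrightarrow> a ! u \<le> 1 - a ! i \<Longrightarrow> u \<in> P \<and> f u < f i"

lemma mm_invariant_init: "mm_invariant a {} 0 0 0 (\<lambda>_. 0)"
  by unfold_locales auto

context mm_invariant
begin

lemma finite_bin: "finite {i\<in>P. f i = j}"
  using packed_subset finite_subset by fastforce

lemma open_card_pos:
  assumes "sorted_items a" "x < length a" "1 < S + a ! x"
  shows "0 < c"
proof (rule ccontr)
  assume "\<not> 0 < c"
  then have "{i\<in>P. f i = b} = {}" using open_card finite_bin by simp
  then have "S = 0" unfolding open_load by (simp only: sum.empty)
  then show False using assms sorted_items_nth_le_1 by fastforce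
qed

lemma close:
  assumes no_fit: "\<And>i. {j\<in>P. f j = b} = {i} \<Longrightarrow> class1 a i \<Longrightarrow>
    \<forall>v<length a. v \<notin> P \<longrightarrow> 1 - a ! i < a ! v"
  shows "mm_invariant a P (Suc b) 0 0 f"
proof
  show "P \<subseteq> {..<length a}" by (fact packed_subset)
  show "f i \<le> Suc b" if "i \<in> P" for i using packed_le_open[OF that] by simp
  show "(\<Sum>i\<in>{i\<in>P. f i = j}. a ! i) \<le> 1" for j by (fact bin_load_le)
  show "\<exists>h\<in>P. f h = f u \<and> (\<forall>v<length a. v \<notin> P \<or> f u < f v \<longrightarrow> h \<le> v)"
    if "u \<in> P" for u using bin_head[OF that] .
  have empty: "{i\<in>P. f i = Suc b} = {}"
    by (auto dest: packed_le_open)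
  show "0 = card {i\<in>P. f i = Suc b}" "0 = (\<Sum>i\<in>{i\<in>P. f i = Suc b}. a ! i)"
    unfolding empty by simp_all
  fix i u assume i: "class1 a i" "f i < Suc b" "{j\<in>P. f j = f i} = {i}"
    and u: "u < length a" "a ! u \<le> 1 - a ! i"
  show "u \<in> P \<and> f u < f i"
  proof (cases "f i = b")
    case True
    then have "\<forall>v<length a. v \<notin> P \<longrightarrow> 1 - a ! i < a ! v"
      using no_fit i(1,3) by simp
    then have "u \<in> P" using u by force
    moreover have "u \<noteq> i" using i(1) u(2) by (auto simp: class1_def)
    ultimately have "f u \<noteq> f i" using i(3) by blast
    then show ?thesis using packed_le_open[OF \<open>u \<in> P\<close>] True \<open>u \<in> P\<close> by simp
  next
    case False
    then show ?thesis using closed_sole_bin i u by simp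
  qed
qed

lemma pack_bin_head:
  assumes x: "x < length a" "x \<notin> P"
    and head: "0 < c \<or> (\<forall>v<length a. v \<notin> insert x P \<longrightarrow> x \<le> v)"
    and u: "u \<in> insert x P"
  defines "f' \<equiv> f(x := b)"
  shows "\<exists>h\<in>insert x P. f' h = f' u \<and>
    (\<forall>v<length a. v \<notin> insert x P \<or> f' u < f' v \<longrightarrow> h \<le> v)"
proof (cases "u = x")
  case True
  have later: "\<not> f' u < f' v" if "v \<in> insert x P" for v
    using that True packed_le_open[of v] by (auto simp: f'_def)
  show ?thesis
  proof (cases "c = 0")
    case True
    then have "\<forall>v<length a. v \<notin> insert x P \<longrightarrow> x \<le> v" using head by simp
    then show ?thesis using later \<open>u = x\<close> by blast
  next
    case False
    then have "{i\<in>P. f i = b} \<noteq> {}" using open_card by (metis card.empty)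
    then obtain w where w: "w \<in> P" "f w = b" by blast
    obtain h where h: "h \<in> P" "f h = f w" "\<forall>v<length a. v \<notin> P \<or> f w < f v \<longrightarrow> h \<le> v"
      using bin_head[OF w(1)] by blast
    have "h \<noteq> x" using h(1) x(2) by blast
    then have "f' h = f' u" using h(2) w(2) \<open>u = x\<close> by (simp add: f'_def)
    moreover have "h \<le> v" if "v < length a" "v \<notin> insert x P \<or> f' u < f' v" for v
      using that later h(3) by blast
    ultimately show ?thesis using h(1) by blast
  qed
next
  case False
  then have "u \<in> P" using u by simp
  obtain h where h: "h \<in> P" "f h = f u" "\<forall>v<length a. v \<notin> P \<or> f u < f v \<longrightarrow> h \<le> v"
    using bin_head[OF \<open>u \<in> P\<close>] by blast
  have "h \<noteq> x" using h(1) x(2) by blast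
  have "h \<le> v" if "v < length a" "v \<notin> insert x P \<or> f' u < f' v" for v
  proof (cases "v = x")
    case True
    then show ?thesis using h(3) x by blast
  next
    case False
    then show ?thesis using that h(3) \<open>u \<noteq> x\<close> by (auto simp: f'_def)
  qed
  then show ?thesis using h(1,2) \<open>h \<noteq> x\<close> \<open>u \<noteq> x\<close> by (auto simp: f'_def)
qed

lemma pack:
  assumes x: "x < length a" "x \<notin> P" and fits: "S + a ! x \<le> 1"
    and head: "0 < c \<or> (\<forall>v<length a. v \<notin> insert x P \<longrightarrow> x \<le> v)"
  shows "mm_invariant a (insert x P) b (S + a ! x) (Suc c) (f(x := b))"
proof -
  let ?f = "f(x := b)"
  have bin: "{i\<in>insert x P. ?f i = j} =
      (if j = b then insert x {i\<in>P. f i = j} else {i\<in>P. f i = j})" for j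
    using x(2) by auto
  show ?thesis
  proof
    show "insert x P \<subseteq> {..<length a}" using packed_subset x(1) by simp
    show "?f i \<le> b" if "i \<in> insert x P" for i using that packed_le_open by auto
    show "Suc c = card {i\<in>insert x P. ?f i = b}"
      unfolding bin using open_card finite_bin x(2) by simp
    show "S + a ! x = (\<Sum>i\<in>{i\<in>insert x P. ?f i = b}. a ! i)"
      unfolding bin using open_load finite_bin x(2) by simp
    show "(\<Sum>i\<in>{i\<in>insert x P. ?f i = j}. a ! i) \<le> 1" for j
      unfolding bin using bin_load_le[of j] open_load finite_bin x(2) fits by simp
    show "\<exists>h\<in>insert x P. ?f h = ?f u \<and>
        (\<forall>v<length a. v \<notin> insert x P \<or> ?f u < ?f v \<longrightarrow> h \<le> v)"
      if "u \<in> insert x P" for u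
      using pack_bin_head[OF x head that] .
    show "u \<in> insert x P \<and> ?f u < ?f i"
      if "class1 a i" "?f i < b" "{j\<in>insert x P. ?f j = ?f i} = {i}"
        "u < length a" "a ! u \<le> 1 - a ! i" for i u
    proof -
      have "i \<noteq> x" using that(2) by auto
      then have "f i < b" using that(2) by simp
      moreover have "{j\<in>P. f j = f i} = {i}"
        using that(3) bin[of "f i"] \<open>i \<noteq> x\<close> \<open>f i < b\<close> by simp
      ultimately have "u \<in> P \<and> f u < f i" using closed_sole_bin that(1,4,5) by blast
      then show ?thesis using \<open>i \<noteq> x\<close> x(2) by auto
    qed
  qed
qed


lemma close_full:
  assumes "2 \<le> k" "k \<le> c"
  shows "mm_invariant a P (Suc b) 0 0 f"
proof (rule close)
  fix i assume "{j\<in>P. f j = b} = {i}"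
  then have "c = 1" using open_card by simp
  then show "\<forall>v<length a. v \<notin> P \<longrightarrow> 1 - a ! i < a ! v" using assms by simp
qed

lemma close_stuck:
  assumes srt: "sorted_items a" and P: "P = {..<length a} - {lo..<hi}"
    and "lo < hi" "hi \<le> length a" and stuck: "1 < S + a ! (hi - 1)"
  shows "mm_invariant a P (Suc b) 0 0 f"
proof (rule close)
  fix i assume "{j\<in>P. f j = b} = {i}"
  then have S: "S = a ! i" using open_load by simp
  show "\<forall>v<length a. v \<notin> P \<longrightarrow> 1 - a ! i < a ! v"
  proof (intro allI impI)
    fix v assume "v < length a" "v \<notin> P"
    then have "v \<le> hi - 1" "hi - 1 < length a" using P assms(3,4) by auto
    then have "a ! (hi - 1) \<le> a ! v" by (rule sorted_items_nth_antimono[OF srt])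
    then show "1 - a ! i < a ! v" using stuck S by simp
  qed
qed

lemma pack_head:
  assumes P: "P = {..<length a} - {lo..<hi}" and "lo < hi" "hi \<le> length a"
    and fits: "S + a ! lo \<le> 1"
  shows "mm_invariant a ({..<length a} - {Suc lo..<hi}) b (S + a ! lo) (Suc c) (f(lo := b))"
proof -
  have "insert lo P = {..<length a} - {Suc lo..<hi}" using P assms(2,3) by auto
  moreover have "mm_invariant a (insert lo P) b (S + a ! lo) (Suc c) (f(lo := b))"
    by (rule pack) (use P assms(2,3) fits in auto)
  ultimately show ?thesis by simp
qed

lemma pack_tail:
  assumes P: "P = {..<length a} - {lo..<hi}" and "lo < hi" "hi \<le> length a"
    and "0 < c" and fits: "S + a ! (hi - 1) \<le> 1"
  shows "mm_invariant a ({..<length a} - {lo..<hi - 1}) b (S + a ! (hi - 1)) (Suc c)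
    (f(hi - 1 := b))"
proof -
  have "insert (hi - 1) P = {..<length a} - {lo..<hi - 1}" using P assms(2,3) by auto
  moreover have "mm_invariant a (insert (hi - 1) P) b (S + a ! (hi - 1)) (Suc c) (f(hi - 1 := b))"
    by (rule pack) (use P assms(2-4) fits in auto)
  ultimately show ?thesis by simp
qed

lemma all_packed:
  assumes srt: "sorted_items a" and all: "P = {..<length a}"
  shows "is_assignment a f \<and> fitting_items_dominated a f"
proof
  have bins: "{i\<in>P. f i = j} = {i. i < length a \<and> f i = j}" for j using all by auto
  show "is_assignment a f" using bin_load_le unfolding is_assignment_def bins by simp
  interpret closed: mm_invariant a P "Suc b" 0 0 f by (rule close) (simp add: all)
  show "fitting_items_dominated a f" unfolding fitting_items_dominated_def
  proof (intro allI impI)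
    fix i u assume i: "i < length a" "class1 a i \<and> sole a f i"
      and u: "u < length a" "a ! u \<le> 1 - a ! i"
    have "{j\<in>P. f j = f i} = {i}" using i all by (auto simp: sole_def)
    moreover have "f i < Suc b" using packed_le_open[of i] i(1) all by simp
    ultimately have "u \<in> P" "f u < f i" using closed.closed_sole_bin[of i u] i u by auto
    obtain h where h: "h \<in> P" "f h = f u" "\<forall>v<length a. v \<notin> P \<or> f u < f v \<longrightarrow> h \<le> v"
      using bin_head[OF \<open>u \<in> P\<close>] by blast
    then have "h \<le> i" using i(1) \<open>f u < f i\<close> by blast
    then have "a ! i \<le> a ! h" using sorted_items_nth_antimono[OF srt] i(1) by simp
    then show "\<exists>h<length a. f h = f u \<and> a ! i \<le> a ! h" using h(1,2) all by auto
  qed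
qed

end

lemma Cons_eq_uptD:
  assumes "h # rest = [lo..<hi]"
  shows "lo < hi" "h = lo" "rest = [Suc lo..<hi]"
    and "last (h # rest) = hi - 1" "butlast (h # rest) = [lo..<hi - 1]"
proof -
  show "lo < hi" using assms by (metis list.simps(3) upt_rec)
  then show "h = lo" "rest = [Suc lo..<hi]" using assms upt_conv_Cons by auto
  have "h # rest = [lo..<hi - 1] @ [hi - 1]"
    using assms \<open>lo < hi\<close> upt_Suc_append[of lo "hi - 1"] by simp
  then show "last (h # rest) = hi - 1" "butlast (h # rest) = [lo..<hi - 1]"
    by (metis last_snoc, metis butlast_snoc)
qed

lemma mm_run_invariant:
  assumes "mm_invariant a ({..<length a} - {lo..<hi}) b S c f" "hi \<le> length a"
    and "rem = [lo..<hi]" "sorted_items a" "2 \<le> k"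
  shows "is_assignment a (mm_run k a rem b S c f) \<and> fitting_items_dominated a (mm_run k a rem b S c f)"
  using assms
proof (induction k a rem b S c f arbitrary: lo hi rule: mm_run.induct)
  case (1 k a b S c f)
  then have "hi \<le> lo" using upt_eq_Nil_conv[of lo hi] by auto
  then have "{..<length a} - {lo..<hi} = {..<length a}" by auto
  then show ?case using mm_invariant.all_packed[OF "1.prems"(1) "1.prems"(4)] by simp
next
  case (2 k a h rest b S c f)
  define P where "P = {..<length a} - {lo..<hi}"
  interpret mm_invariant a P b S c f using "2.prems"(1) unfolding P_def .
  note upt = Cons_eq_uptD[OF "2.prems"(3)]
  note lohi = upt(1) "2.prems"(2) and h = upt(2) and rest = upt(3) and last = upt(4)
    and butlast = upt(5) and run = "2.prems"(4,5)
  show ?case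
  proof (cases "k \<le> c \<and> 0 < c")
    case full: True
    have step: "mm_run k a (h # rest) b S c f = mm_run k a (h # rest) (Suc b) 0 0 f"
      by (subst mm_run.simps) (simp only: if_P[OF full])
    have "mm_invariant a P (Suc b) 0 0 f"
      using close_full[OF "2.prems"(5)] full by simp
    then show ?thesis unfolding step P_def
      by (rule "2.IH"(1)[OF full _ "2.prems"(2,3) run])
  next
    case not_full: False
    show ?thesis
    proof (cases "S + a ! h \<le> 1")
      case head: True
      have step: "mm_run k a (h # rest) b S c f = mm_run k a rest b (S + a ! h) (Suc c) (f(h := b))"
        by (subst mm_run.simps) (simp only: if_not_P[OF not_full] if_P[OF head])
      have "mm_invariant a ({..<length a} - {Suc lo..<hi}) b (S + a ! h) (Suc c) (f(h := b))"
        using pack_head[OF P_def lohi] head h by simp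
      then show ?thesis unfolding step
        by (rule "2.IH"(2)[OF not_full head _ "2.prems"(2) rest run])
    next
      case no_head: False
      have "0 < c" using open_card_pos[OF "2.prems"(4), of lo] no_head h lohi by simp
      show ?thesis
      proof (cases "S + a ! last (h # rest) \<le> 1")
        case tail: True
        have step: "mm_run k a (h # rest) b S c f = mm_run k a (butlast (h # rest))
            b (S + a ! last (h # rest)) (Suc c) (f(last (h # rest) := b))"
          by (subst mm_run.simps)
            (simp only: if_not_P[OF not_full] if_not_P[OF no_head] if_P[OF tail])
        have "mm_invariant a ({..<length a} - {lo..<hi - 1}) b
            (S + a ! last (h # rest)) (Suc c) (f(last (h # rest) := b))"
          using pack_tail[OF P_def lohi \<open>0 < c\<close>] tail last by simp
        moreover have "hi - 1 \<le> length a" using lohi by simp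
        ultimately show ?thesis unfolding step
          by (rule "2.IH"(3)[OF not_full no_head tail _ _ butlast run])
      next
        case no_tail: False
        have step: "mm_run k a (h # rest) b S c f = mm_run k a (h # rest) (Suc b) 0 0 f"
          by (subst mm_run.simps) (simp only: if_not_P[OF not_full] if_not_P[OF no_head]
            if_not_P[OF no_tail] if_P[OF \<open>0 < c\<close>])
        have "mm_invariant a P (Suc b) 0 0 f"
          using close_stuck[OF "2.prems"(4) P_def lohi] no_tail last by simp
        then show ?thesis unfolding step P_def
          by (rule "2.IH"(4)[OF not_full no_head no_tail \<open>0 < c\<close> _ "2.prems"(2,3) run])
      qed
    qed
  qed
qed

lemma MM_fitting_items_dominated:
  assumes "sorted_items a" "2 \<le> k"
  shows "is_assignment a (MM k a) \<and> fitting_items_dominated a (MM k a)"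
proof -
  have none_packed: "{..<length a} - {0..<length a} = {}" by auto
  have "mm_invariant a ({..<length a} - {0..<length a}) 0 0 0 (\<lambda>_. 0)"
    unfolding none_packed by (rule mm_invariant_init)
  then show ?thesis unfolding MM_def by (rule mm_run_invariant[OF _ _ refl assms]) simp
qed

theorem lemma2:
  fixes a :: "real list" and g :: "nat \<Rightarrow> nat"
  assumes "sorted_items a"
    and "is_assignment a g"
  shows "\<exists>g'. is_assignment a g' \<and> num_bins a g' = num_bins a g \<and>
           (\<forall>i<length a. class1 a i \<and> sole a (MM 2 a) i \<longrightarrow> sole a g' i)"
proof (rule exists_assignment_isolating_sole_class1)
  show "\<forall>x\<in>set a. 0 \<le> x" using sorted_items_nonneg[OF assms(1)] .
  show "is_assignment a (MM 2 a)" "fitting_items_dominated a (MM 2 a)"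
    using MM_fitting_items_dominated[OF assms(1)] by simp_all
qed (fact assms(2))

end
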